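(* For $n\geq 1$, $$P^{(\mathsf{inv}, \mathsf{exc})}(\mathfrak{D}_n(321); q, t)=\left(\frac{1+xt}{1+x}\right)^{n}P^{(\mathsf{inv}, \mathsf{cpk},\mathsf{exc})}\left(\mathfrak{D}_n(321); q, \frac{(1+x)^{2}t}{(x+t)(1+xt)},\frac{x+t}{1+xt}\right),$$ equivalently, $$P^{(\mathsf{inv}, \mathsf{cpk},\mathsf{exc})}(\mathfrak{D}_n(321); q, x,t)=\left(\frac{1+u}{1+uv}\right)^{n}P^{(\mathsf{inv}, \mathsf{exc})}(\mathfrak{D}_n(321); q, v),$$ where $u=\frac{1+t^{2}-2xt-(1-t)\sqrt{(1+t)^{2}-4xt}}{2(1-x)t}$ and $v=\frac{(1+t)^{2}-2xt-(1+t)\sqrt{(1+t)^{2}-4xt}}{2xt}$.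
   Context: $\mathfrak{D}_n(321)$ is the set of derangements of $[n]$ avoiding the pattern $321$. $P^{(\mathsf{stat}_1,\ldots,\mathsf{stat}_m)}(\Omega;t_1,\ldots,t_m)=\sum_{\sigma\in\Omega}\prod_jt_j^{\mathsf{stat}_j\sigma}$. $\mathsf{inv}$ is the inversion number, $\mathsf{exc}\,\sigma=\#\{i:\sigma(i)>i\}$, $\mathsf{cpk}\,\sigma=\#\{x:\sigma^{-1}(x)<x>\sigma(x)\}$. *)

theory Defs
  imports "HOL-Combinatorics.Permutations" Complex_Main
begin

definition derangements_321 :: "nat \<Rightarrow> (nat \<Rightarrow> nat) set" where
  "derangements_321 n = {\<sigma>. \<sigma> permutes {1..n}
      \<and> (\<forall>i\<in>{1..n}. \<sigma> i \<noteq> i)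
      \<and> \<not> (\<exists>i j k. 1 \<le> i \<and> i < j \<and> j < k \<and> k \<le> n \<and> \<sigma> i > \<sigma> j \<and> \<sigma> j > \<sigma> k)}"

definition inv_stat :: "nat \<Rightarrow> (nat \<Rightarrow> nat) \<Rightarrow> nat" where
  "inv_stat n \<sigma> = card {(i, j). 1 \<le> i \<and> i < j \<and> j \<le> n \<and> \<sigma> i > \<sigma> j}"

definition exc_stat :: "nat \<Rightarrow> (nat \<Rightarrow> nat) \<Rightarrow> nat" where
  "exc_stat n \<sigma> = card {i \<in> {1..n}. \<sigma> i > i}"

definition cpk_stat :: "nat \<Rightarrow> (nat \<Rightarrow> nat) \<Rightarrow> nat" where
  "cpk_stat n \<sigma> = card {x \<in> {1..n}. inv \<sigma> x < x \<and> x > \<sigma> x}"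

definition P_inv_exc :: "nat \<Rightarrow> real \<Rightarrow> real \<Rightarrow> real" where
  "P_inv_exc n q t = (\<Sum>\<sigma>\<in>derangements_321 n. q ^ inv_stat n \<sigma> * t ^ exc_stat n \<sigma>)"

definition P_inv_cpk_exc :: "nat \<Rightarrow> real \<Rightarrow> real \<Rightarrow> real \<Rightarrow> real" where
  "P_inv_cpk_exc n q y t = (\<Sum>\<sigma>\<in>derangements_321 n.
      q ^ inv_stat n \<sigma> * y ^ cpk_stat n \<sigma> * t ^ exc_stat n \<sigma>)"

end

theory Submission
  imports Defs
begin

text \<open>A 321-avoiding derangement \<open>\<sigma>\<close> is increasing on its excedances \<open>E\<close> and on the
  remaining points, so it is determined by \<open>E\<close> and \<open>V = \<sigma>(E)\<close>; the pairs \<open>(E, V)\<close> that occur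
  are described by a ballot-type inequality which depends only on \<open>E - V\<close> and \<open>V - E\<close>.
  Hence any set \<open>S\<close> of points outside \<open>E \<union> V\<close> can be turned into double excedances (added to
  both \<open>E\<close> and \<open>V\<close>), and every 321-avoiding derangement arises exactly once in this way from one
  without double excedances.  Along such a class \<open>inv = \<Sum>V - \<Sum>E\<close> and \<open>cpk = |V - E|\<close> stay
  fixed while \<open>exc\<close> grows by \<open>|S|\<close>, so the generating polynomial in \<open>(q, y, t)\<close> is a sum of
  terms \<open>q^inv (y t)^k (1 + t)^(n - 2 k)\<close> over derangements without double excedances, \<open>k = |V|\<close>.
  The corollary follows because its substitution satisfies \<open>c^2 y T = t\<close> and \<open>c (1 + T) = 1 + t\<close>
  for \<open>c = (1 + x t) / (1 + x)\<close>.\<close>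

section \<open>Increasing bijections between finite sets of naturals\<close>

definition rank_in :: "nat set \<Rightarrow> nat \<Rightarrow> nat" where
  "rank_in X x = card {u\<in>X. u < x}"

lemma rank_in_mono:
  assumes "finite X" "x \<le> y"
  shows "rank_in X x \<le> rank_in X y"
  unfolding rank_in_def using assms by (intro card_mono) auto

lemma rank_in_Suc:
  assumes "finite X"
  shows "rank_in X (Suc x) = rank_in X x + (if x \<in> X then 1 else 0)"
proof -
  have "{u\<in>X. u < Suc x} = {u\<in>X. u < x} \<union> ({x} \<inter> X)" by auto
  then show ?thesis unfolding rank_in_def using assms by (auto simp: card_insert_if)
qed

lemma rank_in_strict_mono_on:
  assumes "finite X"
  shows "strict_mono_on X (rank_in X)"
proof (rule strict_mono_onI)
  fix x y assume "x \<in> X" "y \<in> X" "x < y"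
  then have "{u\<in>X. u < x} \<subset> {u\<in>X. u < y}" by auto
  then show "rank_in X x < rank_in X y" unfolding rank_in_def using assms by (intro psubset_card_mono) auto
qed

lemma bij_betw_rank_in:
  assumes "finite X"
  shows "bij_betw (rank_in X) X {..<card X}"
proof -
  have inj: "inj_on (rank_in X) X"
    using rank_in_strict_mono_on[OF assms] by (rule strict_mono_on_imp_inj_on)
  have "rank_in X x < card X" if "x \<in> X" for x
    unfolding rank_in_def using assms that by (intro psubset_card_mono) auto
  then have "rank_in X ` X \<subseteq> {..<card X}" by auto
  moreover have "card (rank_in X ` X) = card {..<card X}" using card_image[OF inj] by simp
  ultimately show ?thesis using inj unfolding bij_betw_def by (simp add: card_subset_eq)
qed

lemma rank_in_strict_mono_bij:
  assumes "bij_betw f X Y" "strict_mono_on X f" "x \<in> X"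
  shows "rank_in Y (f x) = rank_in X x"
proof -
  have "{y\<in>Y. y < f x} = f ` {u\<in>X. u < x}"
  proof (intro equalityI subsetI)
    fix y assume "y \<in> {y\<in>Y. y < f x}"
    then obtain u where u: "u \<in> X" "y = f u" "f u < f x" using assms(1) by (auto simp: bij_betw_def)
    have "u < x"
      using strict_mono_onD[OF assms(2) assms(3) u(1)] u(3) by (metis less_asym linorder_neqE_nat)
    then show "y \<in> f ` {u\<in>X. u < x}" using u by auto
  qed (use assms in \<open>auto simp: bij_betw_def strict_mono_on_def\<close>)
  then show ?thesis unfolding rank_in_def
    using assms(1) by (auto simp: bij_betw_def intro!: card_image inj_on_subset[of f X])
qed

text \<open>For \<open>card X = card Y\<close> this is the unique increasing bijection from \<open>X\<close> onto \<open>Y\<close>.\<close>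
definition order_bij :: "nat set \<Rightarrow> nat set \<Rightarrow> nat \<Rightarrow> nat" where
  "order_bij X Y x = inv_into Y (rank_in Y) (rank_in X x)"

context
  fixes X Y :: "nat set"
  assumes fin: "finite X" "finite Y" and card_eq: "card X = card Y"
begin

lemma bij_betw_order_bij: "bij_betw (order_bij X Y) X Y"
proof -
  have "bij_betw (inv_into Y (rank_in Y)) {..<card X} Y"
    using bij_betw_inv_into[OF bij_betw_rank_in[OF fin(2)]] card_eq by simp
  from bij_betw_trans[OF bij_betw_rank_in[OF fin(1)] this] show ?thesis
    unfolding order_bij_def[abs_def] o_def .
qed

lemma rank_in_order_bij:
  assumes "x \<in> X"
  shows "rank_in Y (order_bij X Y x) = rank_in X x"
proof -
  have "rank_in X x \<in> rank_in Y ` Y"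
    using bij_betw_rank_in[OF fin(1)] bij_betw_rank_in[OF fin(2)] assms card_eq
    unfolding bij_betw_def by auto
  then show ?thesis unfolding order_bij_def by (rule f_inv_into_f)
qed

lemma strict_mono_on_order_bij: "strict_mono_on X (order_bij X Y)"
proof (rule strict_mono_onI)
  fix x x' assume x: "x \<in> X" "x' \<in> X" "x < x'"
  have "order_bij X Y x \<in> Y" "order_bij X Y x' \<in> Y"
    using bij_betw_order_bij x by (auto simp: bij_betw_def)
  moreover have "rank_in Y (order_bij X Y x) < rank_in Y (order_bij X Y x')"
    using strict_mono_onD[OF rank_in_strict_mono_on[OF fin(1)] x] by (simp add: rank_in_order_bij x)
  ultimately show "order_bij X Y x < order_bij X Y x'"
    using rank_in_mono[OF fin(2)] by (meson not_le leD)
qed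

lemma strict_mono_bij_eq_order_bij:
  assumes "bij_betw f X Y" "strict_mono_on X f" "x \<in> X"
  shows "f x = order_bij X Y x"
proof -
  have "f x \<in> Y" using assms by (auto simp: bij_betw_def)
  moreover have "order_bij X Y x \<in> Y" using bij_betw_order_bij assms(3) by (auto simp: bij_betw_def)
  moreover have "rank_in Y (f x) = rank_in Y (order_bij X Y x)"
    using rank_in_strict_mono_bij[OF assms] rank_in_order_bij[OF assms(3)] by simp
  ultimately show ?thesis
    using strict_mono_on_imp_inj_on[OF rank_in_strict_mono_on[OF fin(2)]] by (auto dest: inj_onD)
qed

lemma less_order_bij:
  assumes "\<And>m. m \<in> X \<Longrightarrow> rank_in Y (Suc m) \<le> rank_in X m" "x \<in> X"
  shows "x < order_bij X Y x"
proof (rule ccontr)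
  let ?y = "order_bij X Y x"
  assume "\<not> x < ?y"
  have "?y \<in> Y" using bij_betw_order_bij assms(2) by (auto simp: bij_betw_def)
  then have "rank_in Y (Suc ?y) = rank_in X x + 1"
    using rank_in_Suc[OF fin(2)] rank_in_order_bij[OF assms(2)] by simp
  moreover have "rank_in Y (Suc ?y) \<le> rank_in Y (Suc x)"
    using \<open>\<not> x < ?y\<close> by (intro rank_in_mono[OF fin(2)]) simp
  ultimately show False using assms by fastforce
qed

lemma order_bij_less:
  assumes "\<And>m. m \<in> X \<Longrightarrow> rank_in X (Suc m) \<le> rank_in Y m" "x \<in> X"
  shows "order_bij X Y x < x"
proof (rule ccontr)
  let ?y = "order_bij X Y x"
  assume "\<not> ?y < x"
  have "rank_in X (Suc x) = rank_in Y ?y + 1"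
    using rank_in_Suc[OF fin(1)] rank_in_order_bij[OF assms(2)] assms(2) by simp
  moreover have "rank_in Y x \<le> rank_in Y ?y"
    using \<open>\<not> ?y < x\<close> by (intro rank_in_mono[OF fin(2)]) simp
  ultimately show False using assms by fastforce
qed

end

lemma rank_in_Suc_le_if_decreasing:
  assumes "finite B" "inj_on f A" "f ` A \<subseteq> B" "\<And>a. a \<in> A \<Longrightarrow> f a < a"
  shows "rank_in A (Suc m) \<le> rank_in B m"
proof -
  have "f ` {a\<in>A. a < Suc m} \<subseteq> {b\<in>B. b < m}" using assms(3,4) by fastforce
  then have "card (f ` {a\<in>A. a < Suc m}) \<le> card {b\<in>B. b < m}"
    using assms(1) by (intro card_mono) auto
  moreover have "card (f ` {a\<in>A. a < Suc m}) = card {a\<in>A. a < Suc m}"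
    by (rule card_image[OF inj_on_subset[OF assms(2)]]) auto
  ultimately show ?thesis unfolding rank_in_def by simp
qed

lemma rank_in_Diff_atLeastAtMost:
  assumes "X \<subseteq> {1..n}" "m \<le> Suc n"
  shows "rank_in ({1..n} - X) m + rank_in X m = m - 1"
proof -
  have "{u\<in>{1..n} - X. u < m} \<union> {u\<in>X. u < m} = {1..<m}" using assms by auto
  moreover have "finite X" using assms(1) finite_subset by blast
  ultimately show ?thesis unfolding rank_in_def
    by (metis (no_types, lifting) card_Un_disjoint card_atLeastLessThan DiffD2 disjoint_iff
        finite_Diff finite_atLeastAtMost finite_subset mem_Collect_eq subsetI)
qed

lemma rank_in_Un:
  assumes "finite X" "finite Y" "X \<inter> Y = {}"
  shows "rank_in (X \<union> Y) m = rank_in X m + rank_in Y m"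
proof -
  have "{u\<in>X \<union> Y. u < m} = {u\<in>X. u < m} \<union> {u\<in>Y. u < m}" by auto
  then show ?thesis unfolding rank_in_def using assms by (simp add: card_Un_disjoint disjoint_iff)
qed

section \<open>Excedance data of 321-avoiding derangements\<close>

lemma derangements_321D:
  assumes "\<sigma> \<in> derangements_321 n"
  shows "\<sigma> permutes {1..n}" and "\<And>i. i \<in> {1..n} \<Longrightarrow> \<sigma> i \<noteq> i"
    and "\<And>i j k. 1 \<le> i \<Longrightarrow> i < j \<Longrightarrow> j < k \<Longrightarrow> k \<le> n \<Longrightarrow>
      \<sigma> j < \<sigma> i \<Longrightarrow> \<sigma> k < \<sigma> j \<Longrightarrow> False"
  using assms unfolding derangements_321_def by blast+

lemma finite_derangements_321: "finite (derangements_321 n)"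
  by (rule finite_subset[OF _ finite_permutations[of "{1..n}"]])
    (auto simp: derangements_321_def)

definition exc_set :: "nat \<Rightarrow> (nat \<Rightarrow> nat) \<Rightarrow> nat set" where
  "exc_set n \<sigma> = {i\<in>{1..n}. i < \<sigma> i}"

definition exc_vals :: "nat \<Rightarrow> (nat \<Rightarrow> nat) \<Rightarrow> nat set" where
  "exc_vals n \<sigma> = \<sigma> ` exc_set n \<sigma>"

lemma exc_stat_eq_card: "exc_stat n \<sigma> = card (exc_set n \<sigma>)"
  unfolding exc_stat_def exc_set_def ..

lemma exc_set_subset: "exc_set n \<sigma> \<subseteq> {1..n}"
  unfolding exc_set_def by auto

lemma Diff_exc_set_eq:
  assumes "\<sigma> \<in> derangements_321 n"
  shows "{1..n} - exc_set n \<sigma> = {i\<in>{1..n}. \<sigma> i < i}"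
  using derangements_321D(2)[OF assms] unfolding exc_set_def by (fastforce simp: nat_neq_iff)

context
  fixes n :: nat and \<sigma> :: "nat \<Rightarrow> nat"
  assumes perm: "\<sigma> permutes {1..n}"
begin

lemma exc_vals_subset: "exc_vals n \<sigma> \<subseteq> {1..n}"
  using exc_set_subset permutes_in_image[OF perm] unfolding exc_vals_def by blast

lemma bij_betw_exc_set: "bij_betw \<sigma> (exc_set n \<sigma>) (exc_vals n \<sigma>)"
  unfolding exc_vals_def using permutes_inj[OF perm] by (simp add: bij_betw_imageI inj_on_subset)

lemma bij_betw_Diff_exc_set: "bij_betw \<sigma> ({1..n} - exc_set n \<sigma>) ({1..n} - exc_vals n \<sigma>)"
proof -
  have "\<sigma> ` ({1..n} - exc_set n \<sigma>) = \<sigma> ` {1..n} - \<sigma> ` exc_set n \<sigma>"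
    using permutes_inj[OF perm] by (simp add: image_set_diff)
  also have "\<dots> = {1..n} - exc_vals n \<sigma>"
    unfolding exc_vals_def permutes_image[OF perm] ..
  finally show ?thesis
    by (rule bij_betw_imageI[OF inj_on_subset[OF permutes_inj[OF perm] subset_UNIV]])
qed

lemma mem_exc_vals_iff: "x \<in> exc_vals n \<sigma> \<longleftrightarrow> x \<in> {1..n} \<and> inv \<sigma> x < x"
proof
  assume "x \<in> exc_vals n \<sigma>"
  then obtain e where "e \<in> exc_set n \<sigma>" "x = \<sigma> e" unfolding exc_vals_def by auto
  then show "x \<in> {1..n} \<and> inv \<sigma> x < x"
    using permutes_inverses(2)[OF perm] permutes_in_image[OF perm] by (auto simp: exc_set_def)
next
  assume x: "x \<in> {1..n} \<and> inv \<sigma> x < x"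
  then have "inv \<sigma> x \<in> exc_set n \<sigma>"
    using permutes_inverses(1)[OF perm] permutes_in_image[OF permutes_inv[OF perm]]
    by (auto simp: exc_set_def)
  then show "x \<in> exc_vals n \<sigma>"
    unfolding exc_vals_def using permutes_inverses(1)[OF perm] by (metis image_eqI)
qed

lemma cpk_stat_eq_card: "cpk_stat n \<sigma> = card (exc_vals n \<sigma> - exc_set n \<sigma>)"
proof -
  have "x \<in> {1..n} \<and> inv \<sigma> x < x \<and> \<sigma> x < x \<longleftrightarrow> x \<in> exc_vals n \<sigma> - exc_set n \<sigma>" for x
  proof -
    have "\<sigma> x \<noteq> x" if "inv \<sigma> x < x"
      using that permutes_inverses(2)[OF perm, of x] by auto
    then show ?thesis by (auto simp: mem_exc_vals_iff exc_set_def)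
  qed
  then have "{x\<in>{1..n}. inv \<sigma> x < x \<and> \<sigma> x < x} = exc_vals n \<sigma> - exc_set n \<sigma>"
    by blast
  then show ?thesis unfolding cpk_stat_def by simp
qed

end

lemma derangement_321_strict_mono_on_exc_set:
  assumes D: "\<sigma> \<in> derangements_321 n"
  shows "strict_mono_on (exc_set n \<sigma>) \<sigma>"
proof (rule strict_mono_onI, rule ccontr)
  txt \<open>Otherwise no value after position \<open>j\<close> may drop below \<open>\<sigma> j\<close>, and the \<open>n - j\<close> positions
    after \<open>j\<close> do not fit into the fewer than \<open>n - j\<close> remaining values above \<open>\<sigma> j\<close>.\<close>
  fix i j assume ij: "i \<in> exc_set n \<sigma>" "j \<in> exc_set n \<sigma>" "i < j" and "\<not> \<sigma> i < \<sigma> j"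
  have P: "\<sigma> permutes {1..n}" using derangements_321D(1)[OF D] .
  have "\<sigma> i \<noteq> \<sigma> j" using permutes_inj[OF P] ij(3) by (metis injD less_irrefl)
  then have ji: "\<sigma> j < \<sigma> i" using \<open>\<not> \<sigma> i < \<sigma> j\<close> by simp
  have "\<sigma> ` {j<..n} \<subseteq> {\<sigma> j<..n} - {\<sigma> i}"
  proof
    fix y assume "y \<in> \<sigma> ` {j<..n}"
    then obtain k where k: "j < k" "k \<le> n" "y = \<sigma> k" by auto
    have "\<not> \<sigma> k < \<sigma> j" using derangements_321D(3)[OF D, of i j k] ij k ji by (auto simp: exc_set_def)
    moreover have "\<sigma> k \<noteq> \<sigma> j" "\<sigma> k \<noteq> \<sigma> i"
      using permutes_inj[OF P] k ij(3) by (metis injD less_irrefl order.strict_trans)+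
    moreover have "\<sigma> k \<le> n" using permutes_in_image[OF P, of k] k ij by (auto simp: exc_set_def)
    ultimately show "y \<in> {\<sigma> j<..n} - {\<sigma> i}" using k by auto
  qed
  then have "card {j<..n} \<le> card ({\<sigma> j<..n} - {\<sigma> i})"
    by (intro card_inj_on_le[OF inj_on_subset[OF permutes_inj[OF P]]]) auto
  moreover have "\<sigma> i \<le> n" using permutes_in_image[OF P, of i] ij by (auto simp: exc_set_def)
  ultimately show False using ij(2) ji by (simp add: exc_set_def, arith)
qed

lemma derangement_321_strict_mono_on_Diff_exc_set:
  assumes D: "\<sigma> \<in> derangements_321 n"
  shows "strict_mono_on ({1..n} - exc_set n \<sigma>) \<sigma>"
proof (rule strict_mono_onI, rule ccontr)
  txt \<open>Dually, the \<open>i - 1\<close> positions before \<open>i\<close> would need \<open>i - 1\<close> values below \<open>\<sigma> i\<close>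
    other than \<open>\<sigma> j\<close>.\<close>
  fix i j assume "i \<in> {1..n} - exc_set n \<sigma>" "j \<in> {1..n} - exc_set n \<sigma>"
    and ij: "i < j" and "\<not> \<sigma> i < \<sigma> j"
  then have dfc: "i \<in> {1..n}" "\<sigma> i < i" "j \<in> {1..n}" "\<sigma> j < j"
    unfolding Diff_exc_set_eq[OF D] by auto
  have P: "\<sigma> permutes {1..n}" using derangements_321D(1)[OF D] .
  have "\<sigma> i \<noteq> \<sigma> j" using permutes_inj[OF P] ij by (metis injD less_irrefl)
  then have ji: "\<sigma> j < \<sigma> i" using \<open>\<not> \<sigma> i < \<sigma> j\<close> by simp
  have "\<sigma> ` {1..<i} \<subseteq> {1..<\<sigma> i} - {\<sigma> j}"
  proof
    fix y assume "y \<in> \<sigma> ` {1..<i}"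
    then obtain k where k: "1 \<le> k" "k < i" "y = \<sigma> k" by auto
    have "\<not> \<sigma> i < \<sigma> k" using derangements_321D(3)[OF D, of k i j] dfc k ij ji by auto
    moreover have "\<sigma> k \<noteq> \<sigma> j" "\<sigma> k \<noteq> \<sigma> i"
      using permutes_inj[OF P] k ij by (metis injD less_irrefl order.strict_trans)+
    moreover have "1 \<le> \<sigma> k" using permutes_in_image[OF P, of k] k dfc by auto
    ultimately show "y \<in> {1..<\<sigma> i} - {\<sigma> j}" using k by auto
  qed
  then have "card {1..<i} \<le> card ({1..<\<sigma> i} - {\<sigma> j})"
    by (intro card_inj_on_le[OF inj_on_subset[OF permutes_inj[OF P]]]) auto
  moreover have "1 \<le> \<sigma> j" using permutes_in_image[OF P, of j] dfc by auto
  ultimately show False using dfc ji by simp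
qed

lemma not_321_if_strict_mono_on_Un:
  fixes f :: "'a::linorder \<Rightarrow> 'b::linorder"
  assumes "strict_mono_on A f" "strict_mono_on B f" "i \<in> A \<union> B" "j \<in> A \<union> B" "k \<in> A \<union> B"
    and "i < j" "j < k"
  shows "\<not> (f j < f i \<and> f k < f j)"
proof
  have mono: "f x < f y" if "x < y" "x \<in> A \<and> y \<in> A \<or> x \<in> B \<and> y \<in> B" for x y
    using that strict_mono_onD[OF assms(1)] strict_mono_onD[OF assms(2)] by blast
  have "f i < f j \<or> f j < f k \<or> f i < f k"
    using mono[OF assms(6)] mono[OF assms(7)] mono[OF order.strict_trans[OF assms(6,7)]] assms(3-5)
    by blast
  then show "f j < f i \<and> f k < f j \<Longrightarrow> False"
    by (meson less_asym less_trans)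
qed

text \<open>Reconstructs a 321-avoiding derangement from its excedances \<open>E\<close> and their values \<open>V\<close>
  (see \<open>perm_of_exc_exc_set\<close>).\<close>
definition perm_of_exc :: "nat \<Rightarrow> nat set \<Rightarrow> nat set \<Rightarrow> nat \<Rightarrow> nat" where
  "perm_of_exc n E V i =
     (if i \<in> E then order_bij E V i
      else if i \<in> {1..n} then order_bij ({1..n} - E) ({1..n} - V) i else i)"

lemma perm_of_exc_exc_set:
  assumes D: "\<sigma> \<in> derangements_321 n"
  shows "perm_of_exc n (exc_set n \<sigma>) (exc_vals n \<sigma>) = \<sigma>"
proof
  fix i
  have P: "\<sigma> permutes {1..n}" using derangements_321D(1)[OF D] .
  let ?E = "exc_set n \<sigma>" and ?V = "exc_vals n \<sigma>"
  have fin: "finite ?E" "finite ?V" "finite ({1..n} - ?E)" "finite ({1..n} - ?V)"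
    using finite_subset[OF exc_set_subset] finite_subset[OF exc_vals_subset[OF P]] by auto
  consider "i \<in> ?E" | "i \<in> {1..n} - ?E" | "i \<notin> {1..n}" using exc_set_subset by blast
  then show "perm_of_exc n ?E ?V i = \<sigma> i"
  proof cases
    case 1
    have "bij_betw \<sigma> ?E ?V" using bij_betw_exc_set[OF P] .
    from strict_mono_bij_eq_order_bij[OF fin(1,2) bij_betw_same_card[OF this] this
        derangement_321_strict_mono_on_exc_set[OF D] 1]
    show ?thesis unfolding perm_of_exc_def using 1 by simp
  next
    case 2
    have "bij_betw \<sigma> ({1..n} - ?E) ({1..n} - ?V)" using bij_betw_Diff_exc_set[OF P] .
    from strict_mono_bij_eq_order_bij[OF fin(3,4) bij_betw_same_card[OF this] this
        derangement_321_strict_mono_on_Diff_exc_set[OF D] 2]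
    show ?thesis unfolding perm_of_exc_def using 2 by simp
  next
    case 3
    then have "i \<notin> ?E" using exc_set_subset by blast
    then show ?thesis unfolding perm_of_exc_def using 3 permutes_not_in[OF P] by auto
  qed
qed

text \<open>The ballot-type condition saying that the increasing bijection \<open>E \<rightarrow> V\<close> moves points up
  and the one from \<open>[n] - E\<close> onto \<open>[n] - V\<close> moves them down (see \<open>admissible_iff_rank_in\<close>).
  It is phrased so that \<open>m\<close> enters only through \<open>m \<in> E - V\<close>; hence it survives adding or
  removing common points of \<open>E\<close> and \<open>V\<close>.\<close>
definition admissible :: "nat \<Rightarrow> nat set \<Rightarrow> nat set \<Rightarrow> bool" where
  "admissible n E V \<longleftrightarrow> E \<subseteq> {1..n} \<and> V \<subseteq> {1..n} \<and> card E = card V \<and>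
     (\<forall>m\<in>{1..n}. rank_in V m + (if m \<in> E - V then 0 else 1) \<le> rank_in E m)"

lemma admissible_iff_rank_in:
  assumes E: "E \<subseteq> {1..n}" and V: "V \<subseteq> {1..n}" and card_eq: "card E = card V"
  shows "admissible n E V \<longleftrightarrow>
    (\<forall>m\<in>E. rank_in V (Suc m) \<le> rank_in E m) \<and>
    (\<forall>m\<in>{1..n} - E. rank_in ({1..n} - E) (Suc m) \<le> rank_in ({1..n} - V) m)"
proof -
  have fin: "finite E" "finite V" using E V finite_subset by blast+
  have at_E: "rank_in V m + (if m \<in> E - V then 0 else 1) \<le> rank_in E m
      \<longleftrightarrow> rank_in V (Suc m) \<le> rank_in E m" if "m \<in> E" for m
    using that rank_in_Suc[OF fin(2), of m] by auto
  have at_Diff: "rank_in V m + (if m \<in> E - V then 0 else 1) \<le> rank_in E m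
      \<longleftrightarrow> rank_in ({1..n} - E) (Suc m) \<le> rank_in ({1..n} - V) m" if "m \<in> {1..n} - E" for m
  proof -
    have "rank_in ({1..n} - E) (Suc m) + rank_in E m = m"
      using rank_in_Diff_atLeastAtMost[OF E, of "Suc m"] rank_in_Suc[OF fin(1), of m] that by simp
    moreover have "rank_in ({1..n} - V) m + rank_in V m = m - 1"
      using rank_in_Diff_atLeastAtMost[OF V, of m] that by simp
    ultimately show ?thesis using that by auto
  qed
  show ?thesis unfolding admissible_def using E V card_eq at_E at_Diff by blast
qed

lemma admissible_exc:
  assumes D: "\<sigma> \<in> derangements_321 n"
  shows "admissible n (exc_set n \<sigma>) (exc_vals n \<sigma>)"
proof -
  have P: "\<sigma> permutes {1..n}" using derangements_321D(1)[OF D] .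
  let ?E = "exc_set n \<sigma>" and ?V = "exc_vals n \<sigma>"
  have "rank_in ?V (Suc m) \<le> rank_in ?E m" for m
  proof (rule rank_in_Suc_le_if_decreasing)
    show "finite ?E" using finite_subset[OF exc_set_subset] by simp
    show "inj_on (inv \<sigma>) ?V" by (rule inj_on_subset[OF permutes_inj[OF permutes_inv[OF P]] subset_UNIV])
    show "inv \<sigma> ` ?V \<subseteq> ?E"
      unfolding exc_vals_def by (simp add: image_image permutes_inverses(2)[OF P])
    show "inv \<sigma> v < v" if "v \<in> ?V" for v using that mem_exc_vals_iff[OF P] by simp
  qed
  moreover have "rank_in ({1..n} - ?E) (Suc m) \<le> rank_in ({1..n} - ?V) m" for m
  proof (rule rank_in_Suc_le_if_decreasing)
    show "inj_on \<sigma> ({1..n} - ?E)" "\<sigma> ` ({1..n} - ?E) \<subseteq> {1..n} - ?V"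
      using bij_betw_Diff_exc_set[OF P] by (auto simp: bij_betw_def)
    show "\<sigma> i < i" if "i \<in> {1..n} - ?E" for i using that unfolding Diff_exc_set_eq[OF D] by simp
  qed simp
  ultimately show ?thesis
    using admissible_iff_rank_in[OF exc_set_subset exc_vals_subset[OF P]
        bij_betw_same_card[OF bij_betw_exc_set[OF P]]] by blast
qed

lemma admissible_Un_common:
  assumes "A \<inter> B = {}" "S \<subseteq> {1..n} - (A \<union> B)"
  shows "admissible n (A \<union> S) (B \<union> S) \<longleftrightarrow> admissible n A B"
proof (cases "A \<subseteq> {1..n} \<and> B \<subseteq> {1..n}")
  case True
  then have fin: "finite A" "finite B" "finite S" using assms(2) finite_subset by blast+
  have disj: "A \<inter> S = {}" "B \<inter> S = {}" using assms(2) by auto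
  have "(A \<union> S) - (B \<union> S) = A - B" using disj by auto
  then have rank_cond: "rank_in (B \<union> S) m + (if m \<in> (A \<union> S) - (B \<union> S) then 0 else 1) \<le> rank_in (A \<union> S) m
      \<longleftrightarrow> rank_in B m + (if m \<in> A - B then 0 else 1) \<le> rank_in A m" for m
    using rank_in_Un[OF fin(1,3) disj(1)] rank_in_Un[OF fin(2,3) disj(2)] by simp
  have "card (A \<union> S) = card (B \<union> S) \<longleftrightarrow> card A = card B"
    using card_Un_disjoint[OF fin(1,3) disj(1)] card_Un_disjoint[OF fin(2,3) disj(2)] by simp
  then show ?thesis unfolding admissible_def rank_cond using True assms(2) by blast
next
  case False
  then show ?thesis unfolding admissible_def by blast
qed

context
  fixes n :: nat and E V :: "nat set"
  assumes E: "E \<subseteq> {1..n}" and V: "V \<subseteq> {1..n}" and card_eq: "card E = card V"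
begin

lemma finite_exc_data:
  "finite E" "finite V" "finite ({1..n} - E)" "finite ({1..n} - V)"
  using E V finite_subset by auto

lemma card_Diff_exc_data: "card ({1..n} - E) = card ({1..n} - V)"
  using E V card_eq by (simp add: card_Diff_subset finite_exc_data)

lemma bij_betw_perm_of_exc:
  "bij_betw (perm_of_exc n E V) E V"
  "bij_betw (perm_of_exc n E V) ({1..n} - E) ({1..n} - V)"
proof -
  show "bij_betw (perm_of_exc n E V) E V"
    using bij_betw_order_bij[OF finite_exc_data(1,2) card_eq]
    by (rule bij_betw_cong[THEN iffD1, rotated]) (simp add: perm_of_exc_def)
  show "bij_betw (perm_of_exc n E V) ({1..n} - E) ({1..n} - V)"
    using bij_betw_order_bij[OF finite_exc_data(3,4) card_Diff_exc_data]
    by (rule bij_betw_cong[THEN iffD1, rotated]) (simp add: perm_of_exc_def)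
qed

lemma strict_mono_on_perm_of_exc:
  "strict_mono_on E (perm_of_exc n E V)"
  "strict_mono_on ({1..n} - E) (perm_of_exc n E V)"
  using strict_mono_on_order_bij[OF finite_exc_data(1,2) card_eq]
    strict_mono_on_order_bij[OF finite_exc_data(3,4) card_Diff_exc_data]
  by (auto simp: strict_mono_on_def perm_of_exc_def)

lemma perm_of_exc_permutes: "perm_of_exc n E V permutes {1..n}"
proof (rule bij_imp_permutes)
  have "bij_betw (perm_of_exc n E V) (E \<union> ({1..n} - E)) (V \<union> ({1..n} - V))"
    using bij_betw_perm_of_exc by (rule bij_betw_combine) blast
  then show "bij_betw (perm_of_exc n E V) {1..n} {1..n}"
    using E V by (simp add: Un_absorb1 Un_Diff_cancel)
  show "perm_of_exc n E V i = i" if "i \<notin> {1..n}" for i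
    using that E by (auto simp: perm_of_exc_def)
qed

end

lemma perm_of_exc_admissible:
  assumes adm: "admissible n E V"
  shows "perm_of_exc n E V \<in> derangements_321 n"
    and "exc_set n (perm_of_exc n E V) = E"
    and "exc_vals n (perm_of_exc n E V) = V"
proof -
  let ?\<tau> = "perm_of_exc n E V"
  have E: "E \<subseteq> {1..n}" and V: "V \<subseteq> {1..n}" and card_eq: "card E = card V"
    using adm unfolding admissible_def by auto
  note fin = finite_exc_data[OF E V card_eq]
  note ranks = adm[unfolded admissible_iff_rank_in[OF E V card_eq]]
  have up: "i < ?\<tau> i" if "i \<in> E" for i
    using less_order_bij[OF fin(1,2) card_eq _ that] ranks that by (simp add: perm_of_exc_def)
  have down: "?\<tau> i < i" if "i \<in> {1..n} - E" for i
    using order_bij_less[OF fin(3,4) card_Diff_exc_data[OF E V card_eq] _ that] ranks that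
    by (simp add: perm_of_exc_def)
  show exc: "exc_set n ?\<tau> = E"
    unfolding exc_set_def using up down E by (auto dest: less_asym)
  show "exc_vals n ?\<tau> = V"
    unfolding exc_vals_def exc using bij_betw_perm_of_exc(1)[OF E V card_eq] by (simp add: bij_betw_def)
  have "\<not> (?\<tau> j < ?\<tau> i \<and> ?\<tau> k < ?\<tau> j)" if "1 \<le> i" "i < j" "j < k" "k \<le> n" for i j k
    using not_321_if_strict_mono_on_Un[OF strict_mono_on_perm_of_exc[OF E V card_eq], of i j k] that
    by (simp add: Un_Diff_cancel Un_absorb1[OF E])
  moreover have "?\<tau> i \<noteq> i" if "i \<in> {1..n}" for i
    using up down that by (metis Diff_iff less_irrefl)
  ultimately show "?\<tau> \<in> derangements_321 n"
    unfolding derangements_321_def using perm_of_exc_permutes[OF E V card_eq] by blast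
qed

section \<open>Inversions\<close>

lemma inversions_start_at_exc:
  assumes D: "\<sigma> \<in> derangements_321 n"
  shows "{(i, j). 1 \<le> i \<and> i < j \<and> j \<le> n \<and> \<sigma> j < \<sigma> i} =
    Sigma (exc_set n \<sigma>) (\<lambda>i. {j. i < j \<and> j \<le> n \<and> \<sigma> j < \<sigma> i})"
proof -
  have "i \<in> exc_set n \<sigma>" if "1 \<le> i" "i < j" "j \<le> n" "\<sigma> j < \<sigma> i" for i j
  proof (rule ccontr)
    assume "i \<notin> exc_set n \<sigma>"
    then have iF: "i \<in> {1..n} - exc_set n \<sigma>" using that by simp
    then have "\<sigma> i < i" unfolding Diff_exc_set_eq[OF D] by simp
    then have jF: "j \<in> {1..n} - exc_set n \<sigma>" unfolding Diff_exc_set_eq[OF D] using that by simp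
    from strict_mono_onD[OF derangement_321_strict_mono_on_Diff_exc_set[OF D] iF jF \<open>i < j\<close>]
    show False using \<open>\<sigma> j < \<sigma> i\<close> by simp
  qed
  then show ?thesis unfolding exc_set_def by auto
qed

lemma card_permutes_less_value:
  assumes P: "\<sigma> permutes {1..n}" and i: "i \<in> {1..n}"
  shows "card {j\<in>{1..n}. \<sigma> j < \<sigma> i} = \<sigma> i - 1"
proof -
  have "\<sigma> i \<le> n" using permutes_in_image[OF P, of i] i by simp
  have img: "\<sigma> ` {j\<in>{1..n}. \<sigma> j < \<sigma> i} = {1..<\<sigma> i}"
  proof (intro equalityI subsetI)
    fix y assume "y \<in> \<sigma> ` {j\<in>{1..n}. \<sigma> j < \<sigma> i}"
    then obtain j where "j \<in> {1..n}" "\<sigma> j < \<sigma> i" "y = \<sigma> j" by blast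
    then show "y \<in> {1..<\<sigma> i}" using permutes_in_image[OF P, of j] by simp
  next
    fix y assume y: "y \<in> {1..<\<sigma> i}"
    then have "inv \<sigma> y \<in> {j\<in>{1..n}. \<sigma> j < \<sigma> i}"
      using \<open>\<sigma> i \<le> n\<close> permutes_inverses(1)[OF P] permutes_in_image[OF permutes_inv[OF P], of y] by simp
    then show "y \<in> \<sigma> ` {j\<in>{1..n}. \<sigma> j < \<sigma> i}"
      using permutes_inverses(1)[OF P] by (metis image_eqI)
  qed
  have "card (\<sigma> ` {j\<in>{1..n}. \<sigma> j < \<sigma> i}) = card {j\<in>{1..n}. \<sigma> j < \<sigma> i}"
    by (rule card_image[OF inj_on_subset[OF permutes_inj[OF P] subset_UNIV]])
  then show ?thesis unfolding img by simp
qed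

lemma card_inversions_at_exc:
  assumes D: "\<sigma> \<in> derangements_321 n" and i: "i \<in> exc_set n \<sigma>"
  shows "card {j. i < j \<and> j \<le> n \<and> \<sigma> j < \<sigma> i} + i = \<sigma> i"
proof -
  let ?B = "{j. i < j \<and> j \<le> n \<and> \<sigma> j < \<sigma> i}"
  have i': "i \<in> {1..n}" "i < \<sigma> i" using i by (auto simp: exc_set_def)
  have "\<sigma> j < \<sigma> i" if "j \<in> {1..<i}" for j
  proof (cases "j \<in> exc_set n \<sigma>")
    case True
    then show ?thesis using strict_mono_onD[OF derangement_321_strict_mono_on_exc_set[OF D] _ i] that by simp
  next
    case False
    then have "j \<in> {1..n} - exc_set n \<sigma>" using that i' by simp
    then have "\<sigma> j < j" unfolding Diff_exc_set_eq[OF D] by simp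
    then show ?thesis using that i' by simp
  qed
  then have split: "{j\<in>{1..n}. \<sigma> j < \<sigma> i} = {1..<i} \<union> ?B"
    using i' by (auto simp: less_Suc_eq_le) (metis less_irrefl nat_neq_iff)
  have "finite ?B" by (rule finite_subset[of _ "{..n}"]) auto
  then have "card ({1..<i} \<union> ?B) = card {1..<i} + card ?B" by (intro card_Un_disjoint) auto
  then have "i - 1 + card ?B = \<sigma> i - 1"
    using split card_permutes_less_value[OF derangements_321D(1)[OF D] i'(1)] by simp
  moreover have "1 \<le> i" using i' by simp
  ultimately show ?thesis using i'(2) by linarith
qed

lemma inv_stat_add_sum_exc_set:
  assumes D: "\<sigma> \<in> derangements_321 n"
  shows "inv_stat n \<sigma> + \<Sum>(exc_set n \<sigma>) = \<Sum>(exc_vals n \<sigma>)"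
proof -
  let ?B = "\<lambda>i. {j. i < j \<and> j \<le> n \<and> \<sigma> j < \<sigma> i}"
  have fin: "finite (exc_set n \<sigma>)" "\<And>i. finite (?B i)"
    using finite_subset[OF exc_set_subset] by (auto intro: finite_subset[of _ "{..n}"])
  have "inv_stat n \<sigma> = (\<Sum>i\<in>exc_set n \<sigma>. card (?B i))"
    unfolding inv_stat_def inversions_start_at_exc[OF D] using fin by (simp add: card_SigmaI)
  then have "inv_stat n \<sigma> + \<Sum>(exc_set n \<sigma>) = (\<Sum>i\<in>exc_set n \<sigma>. card (?B i) + i)"
    by (simp add: sum.distrib)
  also have "\<dots> = (\<Sum>i\<in>exc_set n \<sigma>. \<sigma> i)"
    using card_inversions_at_exc[OF D] by simp
  also have "\<dots> = \<Sum>(exc_vals n \<sigma>)"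
    unfolding exc_vals_def
    using sum.reindex[OF inj_on_subset[OF permutes_inj[OF derangements_321D(1)[OF D]] subset_UNIV],
        of "\<lambda>x. x"] by simp
  finally show ?thesis .
qed

section \<open>Double excedances\<close>

text \<open>The points of \<open>exc_set n \<sigma> \<inter> exc_vals n \<sigma>\<close> are the double excedances
  \<open>inv \<sigma> x < x < \<sigma> x\<close>.\<close>
definition no_dexc_321 :: "nat \<Rightarrow> (nat \<Rightarrow> nat) set" where
  "no_dexc_321 n = {\<sigma> \<in> derangements_321 n. exc_set n \<sigma> \<inter> exc_vals n \<sigma> = {}}"

definition free_points :: "nat \<Rightarrow> (nat \<Rightarrow> nat) \<Rightarrow> nat set" where
  "free_points n \<sigma> = {1..n} - (exc_set n \<sigma> \<union> exc_vals n \<sigma>)"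

definition add_dexc :: "nat \<Rightarrow> (nat \<Rightarrow> nat) \<times> nat set \<Rightarrow> nat \<Rightarrow> nat" where
  "add_dexc n = (\<lambda>(\<sigma>, S). perm_of_exc n (exc_set n \<sigma> \<union> S) (exc_vals n \<sigma> \<union> S))"

definition remove_dexc :: "nat \<Rightarrow> (nat \<Rightarrow> nat) \<Rightarrow> nat \<Rightarrow> nat" where
  "remove_dexc n \<sigma> = perm_of_exc n (exc_set n \<sigma> - exc_vals n \<sigma>) (exc_vals n \<sigma> - exc_set n \<sigma>)"

lemma exc_data_add_dexc:
  assumes \<sigma>: "\<sigma> \<in> no_dexc_321 n" and S: "S \<subseteq> free_points n \<sigma>"
  shows "add_dexc n (\<sigma>, S) \<in> derangements_321 n"
    and "exc_set n (add_dexc n (\<sigma>, S)) = exc_set n \<sigma> \<union> S"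
    and "exc_vals n (add_dexc n (\<sigma>, S)) = exc_vals n \<sigma> \<union> S"
proof -
  have D: "\<sigma> \<in> derangements_321 n" and disj: "exc_set n \<sigma> \<inter> exc_vals n \<sigma> = {}"
    using \<sigma> unfolding no_dexc_321_def by auto
  have "admissible n (exc_set n \<sigma> \<union> S) (exc_vals n \<sigma> \<union> S)"
    using admissible_Un_common[OF disj] S admissible_exc[OF D] unfolding free_points_def by blast
  from perm_of_exc_admissible[OF this] show
    "add_dexc n (\<sigma>, S) \<in> derangements_321 n"
    "exc_set n (add_dexc n (\<sigma>, S)) = exc_set n \<sigma> \<union> S"
    "exc_vals n (add_dexc n (\<sigma>, S)) = exc_vals n \<sigma> \<union> S"
    unfolding add_dexc_def by simp_all
qed

lemma exc_data_remove_dexc: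
  assumes D: "\<sigma> \<in> derangements_321 n"
  shows "remove_dexc n \<sigma> \<in> no_dexc_321 n"
    and "exc_set n (remove_dexc n \<sigma>) = exc_set n \<sigma> - exc_vals n \<sigma>"
    and "exc_vals n (remove_dexc n \<sigma>) = exc_vals n \<sigma> - exc_set n \<sigma>"
proof -
  let ?E = "exc_set n \<sigma>" and ?V = "exc_vals n \<sigma>"
  have "(?E - ?V) \<union> (?E \<inter> ?V) = ?E" "(?V - ?E) \<union> (?E \<inter> ?V) = ?V" by auto
  then have "admissible n ((?E - ?V) \<union> (?E \<inter> ?V)) ((?V - ?E) \<union> (?E \<inter> ?V))"
    using admissible_exc[OF D] by simp
  moreover have "?E \<inter> ?V \<subseteq> {1..n} - ((?E - ?V) \<union> (?V - ?E))" using exc_set_subset by blast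
  ultimately have "admissible n (?E - ?V) (?V - ?E)"
    using admissible_Un_common[of "?E - ?V" "?V - ?E"] by blast
  from perm_of_exc_admissible[OF this] show
    "remove_dexc n \<sigma> \<in> no_dexc_321 n"
    "exc_set n (remove_dexc n \<sigma>) = ?E - ?V"
    "exc_vals n (remove_dexc n \<sigma>) = ?V - ?E"
    unfolding remove_dexc_def no_dexc_321_def by auto
qed

lemma bij_betw_add_dexc:
  "bij_betw (add_dexc n) (SIGMA \<sigma>:no_dexc_321 n. Pow (free_points n \<sigma>)) (derangements_321 n)"
proof (rule bij_betw_byWitness[where f' = "\<lambda>\<sigma>. (remove_dexc n \<sigma>, exc_set n \<sigma> \<inter> exc_vals n \<sigma>)"])
  show "\<forall>p \<in> SIGMA \<sigma>:no_dexc_321 n. Pow (free_points n \<sigma>).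
      (remove_dexc n (add_dexc n p), exc_set n (add_dexc n p) \<inter> exc_vals n (add_dexc n p)) = p"
  proof (clarsimp)
    fix \<sigma> S assume \<sigma>: "\<sigma> \<in> no_dexc_321 n" and S: "S \<subseteq> free_points n \<sigma>"
    have disj: "exc_set n \<sigma> \<inter> exc_vals n \<sigma> = {}" "exc_set n \<sigma> \<inter> S = {}" "exc_vals n \<sigma> \<inter> S = {}"
      using \<sigma> S unfolding no_dexc_321_def free_points_def by auto
    have "(exc_set n \<sigma> \<union> S) - (exc_vals n \<sigma> \<union> S) = exc_set n \<sigma>"
      "(exc_vals n \<sigma> \<union> S) - (exc_set n \<sigma> \<union> S) = exc_vals n \<sigma>"
      "(exc_set n \<sigma> \<union> S) \<inter> (exc_vals n \<sigma> \<union> S) = S"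
      using disj by auto
    then show "remove_dexc n (add_dexc n (\<sigma>, S)) = \<sigma> \<and>
        exc_set n (add_dexc n (\<sigma>, S)) \<inter> exc_vals n (add_dexc n (\<sigma>, S)) = S"
      using perm_of_exc_exc_set[of \<sigma> n] \<sigma>
      unfolding remove_dexc_def exc_data_add_dexc(2,3)[OF \<sigma> S] no_dexc_321_def by simp
  qed
  show "\<forall>\<sigma>\<in>derangements_321 n. add_dexc n (remove_dexc n \<sigma>, exc_set n \<sigma> \<inter> exc_vals n \<sigma>) = \<sigma>"
  proof
    fix \<sigma> assume D: "\<sigma> \<in> derangements_321 n"
    have "add_dexc n (remove_dexc n \<sigma>, exc_set n \<sigma> \<inter> exc_vals n \<sigma>) =
        perm_of_exc n (exc_set n \<sigma>) (exc_vals n \<sigma>)"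
      using exc_data_remove_dexc(2,3)[OF D]
      by (auto simp: add_dexc_def Un_Diff_Int intro!: arg_cong2[where f = "perm_of_exc n"])
    then show "add_dexc n (remove_dexc n \<sigma>, exc_set n \<sigma> \<inter> exc_vals n \<sigma>) = \<sigma>"
      using perm_of_exc_exc_set[OF D] by simp
  qed
  show "add_dexc n ` (SIGMA \<sigma>:no_dexc_321 n. Pow (free_points n \<sigma>)) \<subseteq> derangements_321 n"
    using exc_data_add_dexc(1) by auto
  show "(\<lambda>\<sigma>. (remove_dexc n \<sigma>, exc_set n \<sigma> \<inter> exc_vals n \<sigma>)) ` derangements_321 n
      \<subseteq> (SIGMA \<sigma>:no_dexc_321 n. Pow (free_points n \<sigma>))"
    using exc_data_remove_dexc exc_set_subset unfolding free_points_def by fastforce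
qed

section \<open>The generating function\<close>

lemma stats_add_dexc:
  assumes \<sigma>: "\<sigma> \<in> no_dexc_321 n" and S: "S \<subseteq> free_points n \<sigma>"
  shows "inv_stat n (add_dexc n (\<sigma>, S)) = inv_stat n \<sigma>"
    and "cpk_stat n (add_dexc n (\<sigma>, S)) = card (exc_vals n \<sigma>)"
    and "exc_stat n (add_dexc n (\<sigma>, S)) = card (exc_vals n \<sigma>) + card S"
proof -
  let ?\<tau> = "add_dexc n (\<sigma>, S)" and ?E = "exc_set n \<sigma>" and ?V = "exc_vals n \<sigma>"
  have D: "\<sigma> \<in> derangements_321 n" and disj: "?E \<inter> ?V = {}" "?E \<inter> S = {}" "?V \<inter> S = {}"
    using \<sigma> S unfolding no_dexc_321_def free_points_def by auto
  have fin: "finite ?E" "finite ?V" "finite S"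
    using exc_set_subset exc_vals_subset[OF derangements_321D(1)[OF D]] S
    unfolding free_points_def by (auto intro: finite_subset)
  have "inv_stat n ?\<tau> + (\<Sum>?E + \<Sum>S) = \<Sum>?V + \<Sum>S"
    using inv_stat_add_sum_exc_set[OF exc_data_add_dexc(1)[OF \<sigma> S]] fin disj
    unfolding exc_data_add_dexc(2,3)[OF \<sigma> S] by (simp add: sum.union_disjoint)
  then show "inv_stat n ?\<tau> = inv_stat n \<sigma>"
    using inv_stat_add_sum_exc_set[OF D] by linarith
  have "(?V \<union> S) - (?E \<union> S) = ?V" using disj by auto
  then show "cpk_stat n ?\<tau> = card ?V"
    using cpk_stat_eq_card[OF derangements_321D(1)[OF exc_data_add_dexc(1)[OF \<sigma> S]]]
    unfolding exc_data_add_dexc(2,3)[OF \<sigma> S] by simp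
  have "card ?E = card ?V"
    using bij_betw_same_card[OF bij_betw_exc_set[OF derangements_321D(1)[OF D]]] .
  then show "exc_stat n ?\<tau> = card ?V + card S"
    unfolding exc_stat_eq_card exc_data_add_dexc(2)[OF \<sigma> S] using fin disj by (simp add: card_Un_disjoint)
qed

lemma card_free_points:
  assumes "\<sigma> \<in> no_dexc_321 n"
  shows "card (free_points n \<sigma>) + 2 * card (exc_vals n \<sigma>) = n"
proof -
  let ?E = "exc_set n \<sigma>" and ?V = "exc_vals n \<sigma>"
  have P: "\<sigma> permutes {1..n}" and disj: "?E \<inter> ?V = {}"
    using assms derangements_321D(1) unfolding no_dexc_321_def by auto
  have sub: "?E \<union> ?V \<subseteq> {1..n}" using exc_set_subset exc_vals_subset[OF P] by blast
  then have fin: "finite ?E" "finite ?V" using finite_subset by auto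
  have "card (free_points n \<sigma>) + card (?E \<union> ?V) = n"
    unfolding free_points_def using card_Diff_subset[OF finite_subset[OF sub] sub] card_mono[OF _ sub]
    by simp
  moreover have "card (?E \<union> ?V) = card ?E + card ?V" using card_Un_disjoint[OF fin disj] .
  moreover have "card ?E = card ?V" using bij_betw_same_card[OF bij_betw_exc_set[OF P]] .
  ultimately show ?thesis by simp
qed

lemma sum_power_card_Pow:
  fixes x :: "'a::comm_semiring_1"
  assumes "finite A"
  shows "(\<Sum>S\<in>Pow A. x ^ card S) = (1 + x) ^ card A"
  using prod_add[OF assms, of "\<lambda>_. x" "\<lambda>_. 1"] by (simp add: add.commute)

lemma P_inv_cpk_exc_eq_sum_no_dexc:
  "P_inv_cpk_exc n q y t =
    (\<Sum>\<sigma>\<in>no_dexc_321 n. q ^ inv_stat n \<sigma> * (y * t) ^ card (exc_vals n \<sigma>) * (1 + t) ^ card (free_points n \<sigma>))"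
proof -
  let ?w = "\<lambda>\<sigma>. q ^ inv_stat n \<sigma> * y ^ cpk_stat n \<sigma> * t ^ exc_stat n \<sigma>"
  have fin: "finite (no_dexc_321 n)" "\<And>\<sigma>. finite (free_points n \<sigma>)"
    using finite_derangements_321 unfolding no_dexc_321_def free_points_def by auto
  have "P_inv_cpk_exc n q y t = (\<Sum>p\<in>(SIGMA \<sigma>:no_dexc_321 n. Pow (free_points n \<sigma>)). ?w (add_dexc n p))"
    unfolding P_inv_cpk_exc_def by (rule sum.reindex_bij_betw[OF bij_betw_add_dexc, symmetric])
  also have "\<dots> = (\<Sum>\<sigma>\<in>no_dexc_321 n. \<Sum>S\<in>Pow (free_points n \<sigma>). ?w (add_dexc n (\<sigma>, S)))"
    using fin by (simp add: sum.Sigma)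
  also have "\<dots> = (\<Sum>\<sigma>\<in>no_dexc_321 n. \<Sum>S\<in>Pow (free_points n \<sigma>).
      q ^ inv_stat n \<sigma> * (y * t) ^ card (exc_vals n \<sigma>) * t ^ card S)"
    by (intro sum.cong refl) (simp add: stats_add_dexc power_add power_mult_distrib mult_ac)
  also have "\<dots> = (\<Sum>\<sigma>\<in>no_dexc_321 n.
      q ^ inv_stat n \<sigma> * (y * t) ^ card (exc_vals n \<sigma>) * (1 + t) ^ card (free_points n \<sigma>))"
    using fin by (simp add: sum_distrib_left[symmetric] sum_power_card_Pow)
  finally show ?thesis .
qed

lemma power_rescale:
  fixes c u T t :: "'a::comm_semiring_1"
  assumes "c ^ 2 * u = t" and "c * (1 + T) = 1 + t"
  shows "c ^ (m + 2 * k) * (u ^ k * (1 + T) ^ m) = t ^ k * (1 + t) ^ m"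
proof -
  have "c ^ (m + 2 * k) * (u ^ k * (1 + T) ^ m) = (c ^ 2 * u) ^ k * (c * (1 + T)) ^ m"
    unfolding power_add power_mult power_mult_distrib by (simp only: ac_simps)
  then show ?thesis unfolding assms .
qed

lemma P_inv_exc_eq_scaled_P_inv_cpk_exc:
  fixes c y T t :: real
  assumes "c ^ 2 * (y * T) = t" and "c * (1 + T) = 1 + t"
  shows "P_inv_exc n q t = c ^ n * P_inv_cpk_exc n q y T"
proof -
  have "P_inv_exc n q t = P_inv_cpk_exc n q 1 t"
    unfolding P_inv_exc_def P_inv_cpk_exc_def by simp
  also have "\<dots> = (\<Sum>\<sigma>\<in>no_dexc_321 n.
      q ^ inv_stat n \<sigma> * (c ^ n * ((y * T) ^ card (exc_vals n \<sigma>) * (1 + T) ^ card (free_points n \<sigma>))))"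
    unfolding P_inv_cpk_exc_eq_sum_no_dexc
  proof (intro sum.cong refl)
    fix \<sigma> assume "\<sigma> \<in> no_dexc_321 n"
    from power_rescale[OF assms, of "card (free_points n \<sigma>)" "card (exc_vals n \<sigma>)"]
    show "q ^ inv_stat n \<sigma> * (1 * t) ^ card (exc_vals n \<sigma>) * (1 + t) ^ card (free_points n \<sigma>) =
        q ^ inv_stat n \<sigma> * (c ^ n * ((y * T) ^ card (exc_vals n \<sigma>) * (1 + T) ^ card (free_points n \<sigma>)))"
      unfolding card_free_points[OF \<open>\<sigma> \<in> no_dexc_321 n\<close>] by simp
  qed
  also have "\<dots> = c ^ n * P_inv_cpk_exc n q y T"
    unfolding P_inv_cpk_exc_eq_sum_no_dexc sum_distrib_left by (simp add: mult_ac)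
  finally show ?thesis .
qed

theorem corollary3p8:
  fixes n :: nat and q x t :: real
  assumes "n \<ge> 1"
    and "1 + x \<noteq> 0" and "x + t \<noteq> 0" and "1 + x * t \<noteq> 0"
  shows "P_inv_exc n q t =
    ((1 + x * t) / (1 + x)) ^ n *
    P_inv_cpk_exc n q ((1 + x)^2 * t / ((x + t) * (1 + x * t))) ((x + t) / (1 + x * t))"
proof (rule P_inv_exc_eq_scaled_P_inv_cpk_exc)
  show "((1 + x * t) / (1 + x)) ^ 2 *
      ((1 + x)^2 * t / ((x + t) * (1 + x * t)) * ((x + t) / (1 + x * t))) = t"
    using assms(2-4) by (simp add: power_divide power2_eq_square)
  have "1 + (x + t) / (1 + x * t) = (1 + x) * (1 + t) / (1 + x * t)"
    using assms(4) by (simp add: field_simps)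
  then show "(1 + x * t) / (1 + x) * (1 + (x + t) / (1 + x * t)) = 1 + t"
    using assms(2,4) by simp
qed

end
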